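(* Let $(b,c)$ be a connected graph over a countable set $X$ with an action of a group $G$ such that $H=H_{b,c}$ is $G$-invariant, fix $x_0\in X$, let $R\subseteq G$ be a subgroup, and let $f\in\mathcal{K}^R$ be harmonic. Let $\mu_f$ be a Borel probability measure on $\mathrm{ex}\,\mathcal{K}^R$ representing $f$ (as provided by Choquet's theorem), i.e. $f(x)=\int_{\mathrm{ex}\,\mathcal{K}^R}k(x)\,d\mu_f(k)$ for all $x\in X$. Then the set $\{k\in\mathrm{ex}\,\mathcal{K}^R: Hk\neq0\}$ is a $\mu_f$-null set.
   Context: A graph over $X$ is $(b,c)$ with $b:X\times X\to[0,\infty)$, $c:X\to\mathbb{R}$, $\sum_yb(x,y)<\infty$ ($b$ need not be symmetric); connected: any two points are joined by a finite sequence $y_1,\dots,y_n$ with $b(y_i,y_{i+1})>0$. $C(X)$ carries the product topology. $H_{b,c}f(x)=\sum_yb(x,y)(f(x)-f(y))+c(x)f(x)$ on $\mathrm{Dom}(H)=\{f:\sum_yb(x,y)|f(y)|<\infty\ \forall x\}$; harmonic: $Hf=0$; $\mathcal{H}^+$: nonnegative nonzero harmonic functions. $T_gf(x)=f(g^{-1}x)$; $H$ is $G$-invariant if $T_g$ preserves $\mathrm{Dom}(H)$ and $HT_g=T_gH$. $\mathcal{K}$ is the closure in $C(X)$ of $\{f\in\mathcal{H}^+:f(x_0)=1\}$ (a compact convex set), and $\mathcal{K}^R=\{f\in\mathcal{K}: T_gf=f\ \forall g\in R\}$; $\mathrm{ex}$ denotes the set of extreme points. *)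

theory Defs
  imports "HOL-Probability.Probability" "HOL-Algebra.Group_Action"
begin

text \<open>Graphs (b,c) over a countable type 'x; functions 'x \<Rightarrow> real carry the
 product topology (HOL-Analysis Function_Topology).\<close>

definition is_graph :: "('x \<Rightarrow> 'x \<Rightarrow> real) \<Rightarrow> bool" where
  "is_graph b \<longleftrightarrow> (\<forall>x y. b x y \<ge> 0) \<and> (\<forall>x. (b x) summable_on UNIV)"

definition graph_connected :: "('x \<Rightarrow> 'x \<Rightarrow> real) \<Rightarrow> bool" where
  "graph_connected b \<longleftrightarrow> (\<forall>x y. (\<lambda>u v. b u v > 0)\<^sup>*\<^sup>* x y)"

definition domH :: "('x \<Rightarrow> 'x \<Rightarrow> real) \<Rightarrow> ('x \<Rightarrow> real) set" where
  "domH b = {f. \<forall>x. (\<lambda>y. b x y * \<bar>f y\<bar>) summable_on UNIV}"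

definition opH :: "('x \<Rightarrow> 'x \<Rightarrow> real) \<Rightarrow> ('x \<Rightarrow> real) \<Rightarrow> ('x \<Rightarrow> real) \<Rightarrow> 'x \<Rightarrow> real" where
  "opH b c f x = (\<Sum>\<^sub>\<infinity>y. b x y * (f x - f y)) + c x * f x"

definition harmonic :: "('x \<Rightarrow> 'x \<Rightarrow> real) \<Rightarrow> ('x \<Rightarrow> real) \<Rightarrow> ('x \<Rightarrow> real) \<Rightarrow> bool" where
  "harmonic b c f \<longleftrightarrow> f \<in> domH b \<and> opH b c f = (\<lambda>_. 0)"

definition posharm :: "('x \<Rightarrow> 'x \<Rightarrow> real) \<Rightarrow> ('x \<Rightarrow> real) \<Rightarrow> ('x \<Rightarrow> real) set" where
  "posharm b c = {f. harmonic b c f \<and> (\<forall>x. f x \<ge> 0) \<and> f \<noteq> (\<lambda>_. 0)}"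

definition transl :: "('g, 'm) monoid_scheme \<Rightarrow> ('g \<Rightarrow> 'x \<Rightarrow> 'x) \<Rightarrow> 'g \<Rightarrow> ('x \<Rightarrow> real) \<Rightarrow> 'x \<Rightarrow> real" where
  "transl G \<phi> g f x = f (\<phi> (inv\<^bsub>G\<^esub> g) x)"

definition G_invariant :: "('g, 'm) monoid_scheme \<Rightarrow> ('g \<Rightarrow> 'x \<Rightarrow> 'x) \<Rightarrow>
    ('x \<Rightarrow> 'x \<Rightarrow> real) \<Rightarrow> ('x \<Rightarrow> real) \<Rightarrow> bool" where
  "G_invariant G \<phi> b c \<longleftrightarrow> (\<forall>g \<in> carrier G.
      transl G \<phi> g ` domH b \<subseteq> domH b \<and>
      (\<forall>f \<in> domH b. opH b c (transl G \<phi> g f) = transl G \<phi> g (opH b c f)))"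

definition Kset :: "('x \<Rightarrow> 'x \<Rightarrow> real) \<Rightarrow> ('x \<Rightarrow> real) \<Rightarrow> 'x \<Rightarrow> ('x \<Rightarrow> real) set" where
  "Kset b c x0 = closure {f \<in> posharm b c. f x0 = 1}"

definition KsetR :: "('x \<Rightarrow> 'x \<Rightarrow> real) \<Rightarrow> ('x \<Rightarrow> real) \<Rightarrow> 'x \<Rightarrow>
    ('g, 'm) monoid_scheme \<Rightarrow> ('g \<Rightarrow> 'x \<Rightarrow> 'x) \<Rightarrow> 'g set \<Rightarrow> ('x \<Rightarrow> real) set" where
  "KsetR b c x0 G \<phi> R = {f \<in> Kset b c x0. \<forall>g \<in> R. transl G \<phi> g f = f}"

definition extreme_points :: "('x \<Rightarrow> real) set \<Rightarrow> ('x \<Rightarrow> real) set" where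
  "extreme_points S = {k \<in> S. \<forall>u \<in> S. \<forall>v \<in> S. \<forall>t::real. 0 < t \<and> t < 1 \<and>
       k = (\<lambda>x. t * u x + (1 - t) * v x) \<longrightarrow> u = k \<and> v = k}"

end

theory Submission imports Defs begin

(* Every element of K is a pointwise limit of nonnegative harmonic functions and hence a nonnegative
   superharmonic function: sum_y b(x,y) k(y) <= (deg x + c x) k(x) for all x. Integrating this
   inequality against mu_f and exchanging the sum over the countable set X with the integral (Tonelli)
   turns both sides into the corresponding quantities for f, which agree because f is harmonic. So the
   nonnegative defect integrates to zero and vanishes almost everywhere, for each of the countably many
   x at once. *)

lemma summable_on_domH:
  assumes "is_graph b" "k \<in> domH b"
  shows "(\<lambda>y. b x y * k y) summable_on UNIV"
proof -
  have "(\<lambda>y. b x y * \<bar>k y\<bar>) summable_on UNIV" using assms(2) by (simp add: domH_def)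
  moreover have "\<And>y. norm (b x y * k y) = b x y * \<bar>k y\<bar>"
    using assms(1) by (simp add: is_graph_def abs_mult)
  ultimately show ?thesis
    using summable_on_iff_abs_summable_on_real by (metis (no_types, lifting) summable_on_cong)
qed

lemma opH_eq_diff:
  assumes "is_graph b" "k \<in> domH b"
  shows "opH b c k x = ((\<Sum>\<^sub>\<infinity>y. b x y) + c x) * k x - (\<Sum>\<^sub>\<infinity>y. b x y * k y)"
proof -
  have deg: "b x summable_on UNIV" using assms(1) by (simp add: is_graph_def)
  have "(\<Sum>\<^sub>\<infinity>y. b x y * (k x - k y)) = (\<Sum>\<^sub>\<infinity>y. b x y * k x + - (b x y * k y))"
    by (simp add: algebra_simps)
  also have "\<dots> = (\<Sum>\<^sub>\<infinity>y. b x y * k x) - (\<Sum>\<^sub>\<infinity>y. b x y * k y)"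
    by (subst infsum_add)
      (simp_all add: summable_on_cmult_left[OF deg] summable_on_uminus summable_on_domH[OF assms]
        infsum_uminus)
  also have "\<dots> = (\<Sum>\<^sub>\<infinity>y. b x y) * k x - (\<Sum>\<^sub>\<infinity>y. b x y * k y)"
    by (simp add: infsum_cmult_left[OF deg])
  finally show ?thesis by (simp add: opH_def algebra_simps)
qed

text \<open>For \<open>k \<ge> 0\<close> membership amounts to \<open>H k \<ge> 0\<close>; the formulation through finite
  partial sums makes the set visibly closed in the product topology.\<close>
definition nonneg_superharmonic :: "('x \<Rightarrow> 'x \<Rightarrow> real) \<Rightarrow> ('x \<Rightarrow> real) \<Rightarrow> ('x \<Rightarrow> real) set" where
  "nonneg_superharmonic b c = {k. (\<forall>y. 0 \<le> k y) \<and> (\<forall>x F. finite F \<longrightarrow>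
      (\<Sum>y\<in>F. b x y * k y) \<le> ((\<Sum>\<^sub>\<infinity>y. b x y) + c x) * k x)}"

lemma closed_nonneg_superharmonic: "closed (nonneg_superharmonic b c)"
  unfolding nonneg_superharmonic_def
  by (intro closed_Collect_conj closed_Collect_all closed_Collect_imp closed_Collect_le
      open_Collect_const continuous_intros continuous_on_product_then_coordinatewise continuous_on_id)

lemma nonneg_superharmonicD:
  assumes "is_graph b" "k \<in> nonneg_superharmonic b c"
  shows nonneg_superharmonic_nonneg: "0 \<le> k y"
    and summable_on_nonneg_superharmonic: "(\<lambda>y. b x y * k y) summable_on UNIV"
    and nonneg_superharmonic_infsum_le: "(\<Sum>\<^sub>\<infinity>y. b x y * k y) \<le> ((\<Sum>\<^sub>\<infinity>y. b x y) + c x) * k x"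
    and nonneg_superharmonic_infsum_nonneg: "0 \<le> (\<Sum>\<^sub>\<infinity>y. b x y * k y)"
proof -
  have k: "\<And>y. 0 \<le> k y" and bd: "\<And>F. finite F \<Longrightarrow> (\<Sum>y\<in>F. b x y * k y) \<le> ((\<Sum>\<^sub>\<infinity>y. b x y) + c x) * k x"
    using assms(2) by (auto simp: nonneg_superharmonic_def)
  have b: "\<And>y. 0 \<le> b x y" using assms(1) by (auto simp: is_graph_def)
  show "0 \<le> k y" by (fact k)
  show s: "(\<lambda>y. b x y * k y) summable_on UNIV"
    by (rule nonneg_bdd_above_summable_on) (use k b bd in \<open>auto intro!: bdd_aboveI\<close>)
  show "(\<Sum>\<^sub>\<infinity>y. b x y * k y) \<le> ((\<Sum>\<^sub>\<infinity>y. b x y) + c x) * k x"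
    by (rule infsum_le_finite_sums[OF s]) (use bd in auto)
  show "0 \<le> (\<Sum>\<^sub>\<infinity>y. b x y * k y)" by (rule infsum_nonneg) (use k b in auto)
qed

lemma nonneg_superharmonic_domH:
  assumes "is_graph b" "k \<in> nonneg_superharmonic b c"
  shows "k \<in> domH b"
  using summable_on_nonneg_superharmonic[OF assms] nonneg_superharmonic_nonneg[OF assms]
  by (simp add: domH_def)

lemma harmonic_iff_nonneg_superharmonic:
  assumes "is_graph b" "k \<in> nonneg_superharmonic b c"
  shows "harmonic b c k \<longleftrightarrow> (\<forall>x. (\<Sum>\<^sub>\<infinity>y. b x y * k y) = ((\<Sum>\<^sub>\<infinity>y. b x y) + c x) * k x)"
  using nonneg_superharmonic_domH[OF assms] opH_eq_diff[OF assms(1) nonneg_superharmonic_domH[OF assms]]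
  by (auto simp: harmonic_def fun_eq_iff)

lemma nonneg_harmonic_in_nonneg_superharmonic:
  assumes "is_graph b" "harmonic b c h" "\<And>y. 0 \<le> h y"
  shows "h \<in> nonneg_superharmonic b c"
proof -
  have dom: "h \<in> domH b" using assms(2) by (simp add: harmonic_def)
  have "(\<Sum>y\<in>F. b x y * h y) \<le> ((\<Sum>\<^sub>\<infinity>y. b x y) + c x) * h x" if "finite F" for x F
  proof -
    have "(\<Sum>y\<in>F. b x y * h y) \<le> (\<Sum>\<^sub>\<infinity>y. b x y * h y)"
      by (rule finite_sum_le_infsum)
        (use summable_on_domH[OF assms(1) dom] that assms in \<open>auto simp: is_graph_def\<close>)
    also have "\<dots> = ((\<Sum>\<^sub>\<infinity>y. b x y) + c x) * h x"
      using opH_eq_diff[OF assms(1) dom, of c x] assms(2) by (simp add: harmonic_def fun_eq_iff)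
    finally show ?thesis .
  qed
  then show ?thesis using assms(3) by (simp add: nonneg_superharmonic_def)
qed

lemma Kset_subset_nonneg_superharmonic:
  assumes "is_graph b"
  shows "Kset b c x0 \<subseteq> nonneg_superharmonic b c"
  unfolding Kset_def
  by (rule closure_minimal)
    (use nonneg_harmonic_in_nonneg_superharmonic[OF assms] closed_nonneg_superharmonic
      in \<open>auto simp: posharm_def\<close>)

lemma ennreal_infsum_eq_nn_integral_count_space:
  fixes g :: "'a \<Rightarrow> real"
  assumes "g summable_on A" "\<And>y. y \<in> A \<Longrightarrow> 0 \<le> g y"
  shows "ennreal (\<Sum>\<^sub>\<infinity>y\<in>A. g y) = (\<integral>\<^sup>+ y. ennreal (g y) \<partial>count_space A)"
proof -
  have "(\<lambda>y. norm (g y)) summable_on A"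
    using assms(1) by (rule summable_on_cong[THEN iffD1, rotated]) (simp add: assms(2))
  then have "Infinite_Set_Sum.abs_summable_on g A"
    by (rule abs_summable_equivalent[THEN iffD1])
  then show ?thesis
    using assms(2) by (simp add: nn_integral_conv_infsetsum infsetsum_infsum)
qed

lemma measurable_case_prod_count_space:
  fixes F :: "'a \<Rightarrow> 'i::countable \<Rightarrow> 'b"
  assumes "\<And>i. (\<lambda>k. F k i) \<in> measurable M N"
  shows "case_prod F \<in> measurable (M \<Otimes>\<^sub>M count_space UNIV) N"
  using measurable_compose_countable[where f = "\<lambda>i p. F (fst p) i" and g = snd] assms
  by (simp add: case_prod_beta')

lemma borel_measurable_nn_integral_count_space:
  fixes F :: "'a \<Rightarrow> 'i::countable \<Rightarrow> ennreal"
  assumes "\<And>i. (\<lambda>k. F k i) \<in> borel_measurable M"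
  shows "(\<lambda>k. \<integral>\<^sup>+ i. F k i \<partial>count_space UNIV) \<in> borel_measurable M"
  by (rule sigma_finite_measure.borel_measurable_nn_integral[OF
        sigma_finite_measure_count_space_countable measurable_case_prod_count_space[OF assms]])
    simp

lemma nn_integral_count_space_swap:
  fixes F :: "'a \<Rightarrow> 'i::countable \<Rightarrow> ennreal"
  assumes "sigma_finite_measure M" "\<And>i. (\<lambda>k. F k i) \<in> borel_measurable M"
  shows "(\<integral>\<^sup>+ k. \<integral>\<^sup>+ i. F k i \<partial>count_space UNIV \<partial>M) = (\<integral>\<^sup>+ i. \<integral>\<^sup>+ k. F k i \<partial>M \<partial>count_space UNIV)"
proof -
  interpret pair_sigma_finite M "count_space (UNIV :: 'i set)"
    by (intro pair_sigma_finite.intro assms sigma_finite_measure_count_space_countable) simp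
  show ?thesis
    by (rule Fubini'[symmetric]) (rule measurable_case_prod_count_space[OF assms(2)])
qed

lemma AE_eq_if_nn_integral_eq:
  fixes u v :: "'a \<Rightarrow> real"
  assumes [measurable]: "u \<in> borel_measurable M" "v \<in> borel_measurable M"
    and "\<And>k. k \<in> space M \<Longrightarrow> 0 \<le> v k" "\<And>k. k \<in> space M \<Longrightarrow> v k \<le> u k"
    and "(\<integral>\<^sup>+ k. ennreal (u k) \<partial>M) = (\<integral>\<^sup>+ k. ennreal (v k) \<partial>M)"
    and "(\<integral>\<^sup>+ k. ennreal (v k) \<partial>M) \<noteq> \<infinity>"
  shows "AE k in M. u k = v k"
proof -
  have "(\<integral>\<^sup>+ k. ennreal (u k) - ennreal (v k) \<partial>M) = 0"
    using assms by (subst nn_integral_diff) (auto intro!: AE_I2 ennreal_leI)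
  then have "AE k in M. ennreal (u k) - ennreal (v k) = 0"
    by (subst (asm) nn_integral_0_iff_AE) auto
  then show ?thesis
  proof (rule AE_mp, intro AE_I2 impI)
    fix k assume "k \<in> space M" "ennreal (u k) - ennreal (v k) = 0"
    then show "u k = v k"
      using assms(3,4)[of k] by (simp add: diff_eq_0_iff_ennreal ennreal_le_iff)
  qed
qed

lemma borel_measurable_infsum_nonneg_superharmonic:
  fixes b :: "'x::countable \<Rightarrow> 'x \<Rightarrow> real"
  assumes "is_graph b" "space M \<subseteq> nonneg_superharmonic b c"
    and "\<And>y. (\<lambda>k. k y) \<in> borel_measurable M"
  shows "(\<lambda>k. \<Sum>\<^sub>\<infinity>y. b x y * k y) \<in> borel_measurable M"
proof -
  have "(\<lambda>k. \<integral>\<^sup>+ y. ennreal (b x y * k y) \<partial>count_space UNIV) \<in> borel_measurable M"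
    by (rule borel_measurable_nn_integral_count_space) (use assms(3) in measurable)
  then have "(\<lambda>k. enn2real (\<integral>\<^sup>+ y. ennreal (b x y * k y) \<partial>count_space UNIV)) \<in> borel_measurable M"
    by measurable
  moreover have "(\<Sum>\<^sub>\<infinity>y. b x y * k y) = enn2real (\<integral>\<^sup>+ y. ennreal (b x y * k y) \<partial>count_space UNIV)"
    if "k \<in> space M" for k
    using that assms(1,2) nonneg_superharmonic_nonneg[OF assms(1)] summable_on_nonneg_superharmonic[OF assms(1)]
      nonneg_superharmonic_infsum_nonneg[OF assms(1)]
    by (subst ennreal_infsum_eq_nn_integral_count_space[symmetric]) (auto simp: is_graph_def)
  ultimately show ?thesis by (subst measurable_cong) auto
qed

lemma nn_integral_infsum_nonneg_superharmonic:
  fixes b :: "'x::countable \<Rightarrow> 'x \<Rightarrow> real"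
  assumes "is_graph b" "sigma_finite_measure M" "space M \<subseteq> nonneg_superharmonic b c"
    and "\<And>y. (\<lambda>k. k y) \<in> borel_measurable M"
    and "f \<in> nonneg_superharmonic b c" "\<And>y. ennreal (f y) = (\<integral>\<^sup>+ k. ennreal (k y) \<partial>M)"
  shows "(\<integral>\<^sup>+ k. ennreal (\<Sum>\<^sub>\<infinity>y. b x y * k y) \<partial>M) = ennreal (\<Sum>\<^sub>\<infinity>y. b x y * f y)"
proof -
  have b: "\<And>y. 0 \<le> b x y" using assms(1) by (simp add: is_graph_def)
  have as_integral: "ennreal (\<Sum>\<^sub>\<infinity>y. b x y * k y) = (\<integral>\<^sup>+ y. ennreal (b x y * k y) \<partial>count_space UNIV)"
    if "k \<in> nonneg_superharmonic b c" for k
    using b nonneg_superharmonic_nonneg[OF assms(1) that]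
    by (intro ennreal_infsum_eq_nn_integral_count_space summable_on_nonneg_superharmonic[OF assms(1) that])
      simp
  have "(\<integral>\<^sup>+ k. ennreal (\<Sum>\<^sub>\<infinity>y. b x y * k y) \<partial>M)
      = (\<integral>\<^sup>+ k. \<integral>\<^sup>+ y. ennreal (b x y * k y) \<partial>count_space UNIV \<partial>M)"
    using assms(3) by (intro nn_integral_cong as_integral) auto
  also have "\<dots> = (\<integral>\<^sup>+ y. \<integral>\<^sup>+ k. ennreal (b x y * k y) \<partial>M \<partial>count_space UNIV)"
    by (rule nn_integral_count_space_swap[OF assms(2), where F = "\<lambda>k y. ennreal (b x y * k y)"])
      (use assms(4) in measurable)
  also have "\<dots> = (\<integral>\<^sup>+ y. ennreal (b x y * f y) \<partial>count_space UNIV)"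
    using assms(4,6) b by (simp add: ennreal_mult' nn_integral_cmult)
  also have "\<dots> = ennreal (\<Sum>\<^sub>\<infinity>y. b x y * f y)"
    by (rule as_integral[OF assms(5), symmetric])
  finally show ?thesis .
qed

lemma pred_harmonic:
  fixes b :: "'x::countable \<Rightarrow> 'x \<Rightarrow> real"
  assumes "is_graph b" "space M \<subseteq> nonneg_superharmonic b c"
    and "\<And>y. (\<lambda>k. k y) \<in> borel_measurable M"
  shows "Measurable.pred M (harmonic b c)"
proof -
  have "Measurable.pred M (\<lambda>k. (\<Sum>\<^sub>\<infinity>y. b x y * k y) = ((\<Sum>\<^sub>\<infinity>y. b x y) + c x) * k x)" for x
    unfolding pred_def
    by (intro borel_measurable_eq borel_measurable_infsum_nonneg_superharmonic[OF assms])
      (use assms(3) in measurable)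
  then have "Measurable.pred M (\<lambda>k. \<forall>x. (\<Sum>\<^sub>\<infinity>y. b x y * k y) = ((\<Sum>\<^sub>\<infinity>y. b x y) + c x) * k x)"
    by measurable
  then show ?thesis
    by (rule measurable_cong[THEN iffD1, rotated])
      (use assms(2) harmonic_iff_nonneg_superharmonic[OF assms(1)] in auto)
qed

lemma nn_integral_diag_nonneg_superharmonic:
  assumes "is_graph b" "space M \<subseteq> nonneg_superharmonic b c"
    and "\<And>y. (\<lambda>k. k y) \<in> borel_measurable M"
    and "f \<in> nonneg_superharmonic b c" "\<And>y. ennreal (f y) = (\<integral>\<^sup>+ k. ennreal (k y) \<partial>M)"
  shows "(\<integral>\<^sup>+ k. ennreal (((\<Sum>\<^sub>\<infinity>y. b x y) + c x) * k x) \<partial>M) = ennreal (((\<Sum>\<^sub>\<infinity>y. b x y) + c x) * f x)"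
proof (cases "0 \<le> (\<Sum>\<^sub>\<infinity>y. b x y) + c x")
  case True
  then show ?thesis using assms(3,5) by (simp add: ennreal_mult' nn_integral_cmult)
next
  case False
  have vanish: "((\<Sum>\<^sub>\<infinity>y. b x y) + c x) * k x = 0" if "k \<in> nonneg_superharmonic b c" for k
  proof -
    have "0 \<le> ((\<Sum>\<^sub>\<infinity>y. b x y) + c x) * k x"
      using nonneg_superharmonic_infsum_nonneg[OF assms(1) that, where x = x]
        nonneg_superharmonic_infsum_le[OF assms(1) that, where x = x] by simp
    then show ?thesis
      using False nonneg_superharmonic_nonneg[OF assms(1) that, of x] by (auto simp: zero_le_mult_iff)
  qed
  have "(\<integral>\<^sup>+ k. ennreal (((\<Sum>\<^sub>\<infinity>y. b x y) + c x) * k x) \<partial>M) = (\<integral>\<^sup>+ k. 0 \<partial>M)"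
    by (rule nn_integral_cong) (simp add: vanish[OF subsetD[OF assms(2)]])
  then show ?thesis by (simp add: vanish[OF assms(4)])
qed

lemma AE_harmonic_if_barycenter_harmonic:
  fixes b :: "'x::countable \<Rightarrow> 'x \<Rightarrow> real"
  assumes "is_graph b" "sigma_finite_measure M" "space M \<subseteq> nonneg_superharmonic b c"
    and "\<And>y. (\<lambda>k. k y) \<in> borel_measurable M"
    and "harmonic b c f" "\<And>y. 0 \<le> f y" "\<And>y. ennreal (f y) = (\<integral>\<^sup>+ k. ennreal (k y) \<partial>M)"
  shows "AE k in M. harmonic b c k"
proof -
  have f: "f \<in> nonneg_superharmonic b c"
    by (rule nonneg_harmonic_in_nonneg_superharmonic[OF assms(1,5,6)])
  have "AE k in M. ((\<Sum>\<^sub>\<infinity>y. b x y) + c x) * k x = (\<Sum>\<^sub>\<infinity>y. b x y * k y)" for x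
  proof (rule AE_eq_if_nn_integral_eq)
    show "(\<lambda>k. ((\<Sum>\<^sub>\<infinity>y. b x y) + c x) * k x) \<in> borel_measurable M"
      using assms(4) by measurable
    show "(\<lambda>k. \<Sum>\<^sub>\<infinity>y. b x y * k y) \<in> borel_measurable M"
      by (rule borel_measurable_infsum_nonneg_superharmonic[OF assms(1,3,4)])
    show "0 \<le> (\<Sum>\<^sub>\<infinity>y. b x y * k y)" "(\<Sum>\<^sub>\<infinity>y. b x y * k y) \<le> ((\<Sum>\<^sub>\<infinity>y. b x y) + c x) * k x"
      if "k \<in> space M" for k
      using nonneg_superharmonic_infsum_nonneg[OF assms(1)] nonneg_superharmonic_infsum_le[OF assms(1)]
        subsetD[OF assms(3) that] by auto
    have "(\<Sum>\<^sub>\<infinity>y. b x y * f y) = ((\<Sum>\<^sub>\<infinity>y. b x y) + c x) * f x"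
      using assms(5) harmonic_iff_nonneg_superharmonic[OF assms(1) f] by simp
    then show "(\<integral>\<^sup>+ k. ennreal (((\<Sum>\<^sub>\<infinity>y. b x y) + c x) * k x) \<partial>M)
        = (\<integral>\<^sup>+ k. ennreal (\<Sum>\<^sub>\<infinity>y. b x y * k y) \<partial>M)"
      by (simp add: nn_integral_diag_nonneg_superharmonic[OF assms(1,3,4) f assms(7)]
          nn_integral_infsum_nonneg_superharmonic[OF assms(1-4) f assms(7)])
    show "(\<integral>\<^sup>+ k. ennreal (\<Sum>\<^sub>\<infinity>y. b x y * k y) \<partial>M) \<noteq> \<infinity>"
      by (simp add: nn_integral_infsum_nonneg_superharmonic[OF assms(1-4) f assms(7)])
  qed
  then have "AE k in M. \<forall>x. ((\<Sum>\<^sub>\<infinity>y. b x y) + c x) * k x = (\<Sum>\<^sub>\<infinity>y. b x y * k y)"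
    by (simp add: AE_all_countable)
  then show ?thesis
    by (rule AE_mp) (use assms(3) harmonic_iff_nonneg_superharmonic[OF assms(1)] in \<open>auto intro!: AE_I2\<close>)
qed

theorem lemma3:
  fixes b :: "'x::countable \<Rightarrow> 'x \<Rightarrow> real" and c :: "'x \<Rightarrow> real"
    and G (structure) and \<phi> :: "'g \<Rightarrow> 'x \<Rightarrow> 'x" and R :: "'g set"
    and x0 :: 'x and f :: "'x \<Rightarrow> real" and M :: "('x \<Rightarrow> real) measure"
  assumes "is_graph b" and "graph_connected b"
    and "group_action G UNIV \<phi>"
    and "G_invariant G \<phi> b c"
    and "subgroup R G"
    and "f \<in> KsetR b c x0 G \<phi> R" and "harmonic b c f"
    and "prob_space M"
    and "sets M = sets (restrict_space borel (extreme_points (KsetR b c x0 G \<phi> R)))"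
    and "space M = extreme_points (KsetR b c x0 G \<phi> R)"
    and "\<forall>x. ennreal (f x) = (\<integral>\<^sup>+ k. ennreal (k x) \<partial>M)"
  shows "{k \<in> extreme_points (KsetR b c x0 G \<phi> R). \<not> harmonic b c k} \<in> null_sets M"
proof -
  have K: "KsetR b c x0 G \<phi> R \<subseteq> nonneg_superharmonic b c"
    using Kset_subset_nonneg_superharmonic[OF assms(1)] by (auto simp: KsetR_def)
  have space: "space M \<subseteq> nonneg_superharmonic b c"
    using K assms(10) by (auto simp: extreme_points_def)
  have eval: "(\<lambda>k. k y) \<in> borel_measurable M" for y
    unfolding measurable_cong_sets[OF assms(9) refl]
    by (intro measurable_restrict_space1 borel_measurable_continuous_onI continuous_on_product_coordinates)
  have "AE k in M. harmonic b c k"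
    using assms(6,7,11) K nonneg_superharmonic_nonneg[OF assms(1)]
    by (intro AE_harmonic_if_barycenter_harmonic[OF assms(1) _ space eval] prob_space_imp_sigma_finite
        assms(8)) auto
  moreover have "{k \<in> space M. \<not> harmonic b c k} \<in> sets M"
    using pred_harmonic[OF assms(1) space eval] by measurable
  ultimately show ?thesis
    using assms(10) by (simp add: AE_iff_null)
qed

end
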